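(* Consider an RBM with observed variables $X\in\{-1,1\}^n$ as in the context, with parameter $s$. Fix an observed variable $u$ and subsets $I,S\subseteq[n]$ such that $\{u\},I,S$ are pairwise disjoint, $I$ is nonempty, and $I$ is a subset of the MRF neighborhood of $u$. Fix any assignments $x_u\in\{-1,1\}$, $x_I\in\{-1,1\}^{|I|}$, $x_S\in\{-1,1\}^{|S|}$. Then there exists a subset $I'\subseteq I$ with $|I'|\le2^s$ such that \[\nu_{u,I'|S}(x_u,x_{I'}|x_S)\ge\frac{1}{4^{2^s}}\left(\frac{1}{|I|}\right)^{2^s(2^s+1)}\nu_{u,I|S}(x_u,x_I|x_S),\] where $x_{I'}$ is the restriction of $x_I$ to $I'$.
   Context: RBM: $\mathbb{P}(X=x,Y=y)\propto\exp(x^TJy+h^Tx+g^Ty)$ over observed $X\in\{-1,1\}^n$, latent $Y\in\{-1,1\}^m$, $J\in\mathbb{R}^{n\times m}$, $h\in\mathbb{R}^n$, $g\in\mathbb{R}^m$. The marginal of $X$ is $\propto\exp(f(x))$, $f(x)=\sum_j\rho(J_j\cdot x+g_j)+h^Tx$, $\rho(t)=\log(e^t+e^{-t})$, $J_j$ the $j$-th column; $f=\sum_{T\subseteq[n]}\hat f(T)\chi_T$, $\chi_T(x)=\prod_{i\in T}x_i$. MRF neighborhood of $u$: all $i\ne u$ with $\hat f(T)\ne0$ for some $T\ni u,i$. $s$: maximum over $u$ of the number of latent $j$ with $J_{i,j}\ne0$ for some $i$ in the MRF neighborhood of $u$. For disjoint $\{u\},I,S$: $\nu_{u,I|S}(x_u,x_I|x_S):=|\mathbb{P}(X_u=x_u,X_I=x_I|X_S=x_S)-\mathbb{P}(X_u=x_u|X_S=x_S)\mathbb{P}(X_I=x_I|X_S=x_S)|$,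 probabilities under the marginal of the RBM. *)

theory Defs
  imports Complex_Main
begin

text \<open>Observed indices are 0..n-1, latent indices 0..m-1. A configuration of the
observed variables is a function x :: nat => real with x i in {-1,1} for i < n
and x i = 0 for i >= n (so the cube is finite).\<close>

definition cube :: "nat \<Rightarrow> (nat \<Rightarrow> real) set" where
  "cube n = {x. (\<forall>i<n. x i = 1 \<or> x i = -1) \<and> (\<forall>i\<ge>n. x i = 0)}"

definition rho :: "real \<Rightarrow> real" where
  "rho t = ln (exp t + exp (- t))"

definition rbm_f :: "nat \<Rightarrow> nat \<Rightarrow> (nat \<Rightarrow> nat \<Rightarrow> real) \<Rightarrow> (nat \<Rightarrow> real) \<Rightarrow> (nat \<Rightarrow> real)
    \<Rightarrow> (nat \<Rightarrow> real) \<Rightarrow> real" where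
  "rbm_f n m J h g x = (\<Sum>j<m. rho ((\<Sum>i<n. J i j * x i) + g j)) + (\<Sum>i<n. h i * x i)"

definition chi :: "nat set \<Rightarrow> (nat \<Rightarrow> real) \<Rightarrow> real" where
  "chi T x = (\<Prod>i\<in>T. x i)"

definition fourier_coeff :: "nat \<Rightarrow> ((nat \<Rightarrow> real) \<Rightarrow> real) \<Rightarrow> nat set \<Rightarrow> real" where
  "fourier_coeff n F T = (\<Sum>x\<in>cube n. F x * chi T x) / 2 ^ n"

definition mrf_nbhd :: "nat \<Rightarrow> nat \<Rightarrow> (nat \<Rightarrow> nat \<Rightarrow> real) \<Rightarrow> (nat \<Rightarrow> real) \<Rightarrow> (nat \<Rightarrow> real)
    \<Rightarrow> nat \<Rightarrow> nat set" where
  "mrf_nbhd n m J h g u = {i. i < n \<and> i \<noteq> u \<and>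
     (\<exists>T. T \<subseteq> {..<n} \<and> u \<in> T \<and> i \<in> T \<and> fourier_coeff n (rbm_f n m J h g) T \<noteq> 0)}"

definition rbm_s :: "nat \<Rightarrow> nat \<Rightarrow> (nat \<Rightarrow> nat \<Rightarrow> real) \<Rightarrow> (nat \<Rightarrow> real) \<Rightarrow> (nat \<Rightarrow> real) \<Rightarrow> nat" where
  "rbm_s n m J h g = Max ((\<lambda>u. card {j. j < m \<and> (\<exists>i\<in>mrf_nbhd n m J h g u. J i j \<noteq> 0)}) ` {..<n})"

definition rbm_prob :: "nat \<Rightarrow> nat \<Rightarrow> (nat \<Rightarrow> nat \<Rightarrow> real) \<Rightarrow> (nat \<Rightarrow> real) \<Rightarrow> (nat \<Rightarrow> real)
    \<Rightarrow> nat set \<Rightarrow> (nat \<Rightarrow> real) \<Rightarrow> real" where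
  "rbm_prob n m J h g A xa =
     (\<Sum>x\<in>{x\<in>cube n. \<forall>i\<in>A. x i = xa i}. exp (rbm_f n m J h g x))
     / (\<Sum>x\<in>cube n. exp (rbm_f n m J h g x))"

definition rbm_cond :: "nat \<Rightarrow> nat \<Rightarrow> (nat \<Rightarrow> nat \<Rightarrow> real) \<Rightarrow> (nat \<Rightarrow> real) \<Rightarrow> (nat \<Rightarrow> real)
    \<Rightarrow> nat set \<Rightarrow> nat set \<Rightarrow> (nat \<Rightarrow> real) \<Rightarrow> real" where
  "rbm_cond n m J h g A S xa = rbm_prob n m J h g (A \<union> S) xa / rbm_prob n m J h g S xa"

text \<open>nu_{u,I|S}(x_u, x_I | x_S); the assignment is given by a single function xa.\<close>
definition rbm_nu :: "nat \<Rightarrow> nat \<Rightarrow> (nat \<Rightarrow> nat \<Rightarrow> real) \<Rightarrow> (nat \<Rightarrow> real) \<Rightarrow> (nat \<Rightarrow> real)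
    \<Rightarrow> nat \<Rightarrow> nat set \<Rightarrow> nat set \<Rightarrow> (nat \<Rightarrow> real) \<Rightarrow> real" where
  "rbm_nu n m J h g u I S xa =
     \<bar>rbm_cond n m J h g (insert u I) S xa
       - rbm_cond n m J h g {u} S xa * rbm_cond n m J h g I S xa\<bar>"

end

theory Submission
  imports Defs "HOL-Library.FuncSet"
begin

(* Let A be the set of latent units adjacent to I, so |A| <= s. Given the latent units in A,
   the spins in I are independent with logistic laws q_i(y); hence every unnormalised marginal
   fixing the spins of some I' within I is a mixture over y in {-1,1}^A of products of the
   q_i(y), and nu_{u,I'|S} = |sum_y d(y) prod_{i in I'} q_i(y)| with d independent of I'.
   A sum over at most 2^s points y of such products, with |q| <= 1, is dominated up to the
   factor (2(|I|+1))^(2^s) by the sum over a subproduct of at most 2^s factors: splitting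
   q_t = (q_t - q_t(y0)) + q_t(y0) and telescoping either bounds it by the empty product or
   yields a weight vanishing at y0, which removes one point from the sum. *)

lemma sum_prod_insert_split:
  fixes d :: "'a \<Rightarrow> real" and q :: "nat \<Rightarrow> 'a \<Rightarrow> real"
  assumes "finite I" "t \<notin> I"
  shows "(\<Sum>y\<in>Y. d y * (\<Prod>i\<in>insert t I. q i y))
    = (\<Sum>y\<in>Y. d y * (q t y - q t y\<^sub>0) * (\<Prod>i\<in>I. q i y)) + q t y\<^sub>0 * (\<Sum>y\<in>Y. d y * (\<Prod>i\<in>I. q i y))"
  using assms by (simp add: sum_distrib_left sum.distrib[symmetric] algebra_simps)

lemma abs_sum_prod_insert_le:
  fixes d :: "'a \<Rightarrow> real" and q :: "nat \<Rightarrow> 'a \<Rightarrow> real"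
  assumes "finite I" "t \<notin> I" "\<bar>q t y\<^sub>0\<bar> \<le> 1"
  shows "\<bar>\<Sum>y\<in>Y. d y * (\<Prod>i\<in>insert t I. q i y)\<bar>
    \<le> \<bar>\<Sum>y\<in>Y. d y * (q t y - q t y\<^sub>0) * (\<Prod>i\<in>I. q i y)\<bar> + \<bar>\<Sum>y\<in>Y. d y * (\<Prod>i\<in>I. q i y)\<bar>"
proof -
  have "\<bar>q t y\<^sub>0 * (\<Sum>y\<in>Y. d y * (\<Prod>i\<in>I. q i y))\<bar> \<le> \<bar>\<Sum>y\<in>Y. d y * (\<Prod>i\<in>I. q i y)\<bar>"
    using assms(3) by (simp add: abs_mult mult_left_le_one_le)
  then show ?thesis
    unfolding sum_prod_insert_split[OF assms(1,2), where y\<^sub>0 = y\<^sub>0] by linarith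
qed

lemma abs_sum_prod_diff_le_subproduct:
  fixes d :: "'a \<Rightarrow> real" and q :: "nat \<Rightarrow> 'a \<Rightarrow> real"
  assumes "finite I" "t \<notin> I" "\<bar>q t y\<^sub>0\<bar> \<le> 1"
  obtains T where "T \<in> {I, insert t I}"
    "\<bar>\<Sum>y\<in>Y. d y * (q t y - q t y\<^sub>0) * (\<Prod>i\<in>I. q i y)\<bar> \<le> 2 * \<bar>\<Sum>y\<in>Y. d y * (\<Prod>i\<in>T. q i y)\<bar>"
proof -
  have "\<bar>q t y\<^sub>0 * (\<Sum>y\<in>Y. d y * (\<Prod>i\<in>I. q i y))\<bar> \<le> \<bar>\<Sum>y\<in>Y. d y * (\<Prod>i\<in>I. q i y)\<bar>"
    using assms(3) by (simp add: abs_mult mult_left_le_one_le)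
  then have "\<bar>\<Sum>y\<in>Y. d y * (q t y - q t y\<^sub>0) * (\<Prod>i\<in>I. q i y)\<bar>
      \<le> \<bar>\<Sum>y\<in>Y. d y * (\<Prod>i\<in>insert t I. q i y)\<bar> + \<bar>\<Sum>y\<in>Y. d y * (\<Prod>i\<in>I. q i y)\<bar>"
    unfolding sum_prod_insert_split[OF assms(1,2), where y\<^sub>0 = y\<^sub>0] by linarith
  then show thesis
    using that[of I] that[of "insert t I"] by fastforce
qed

lemma sum_prod_telescope:
  fixes d :: "'a \<Rightarrow> real" and q :: "nat \<Rightarrow> 'a \<Rightarrow> real"
  assumes "finite I" and "\<forall>i\<in>I. \<bar>q i y\<^sub>0\<bar> \<le> 1"
  obtains "\<bar>\<Sum>y\<in>Y. d y * (\<Prod>i\<in>I. q i y)\<bar> \<le> (card I + 1) * \<bar>\<Sum>y\<in>Y. d y\<bar>"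
  | t I0 where "t \<in> I" "I0 \<subseteq> I - {t}"
    "\<bar>\<Sum>y\<in>Y. d y * (\<Prod>i\<in>I. q i y)\<bar>
       \<le> (card I + 1) * \<bar>\<Sum>y\<in>Y. d y * (q t y - q t y\<^sub>0) * (\<Prod>i\<in>I0. q i y)\<bar>"
proof -
  define D where "D t I0 = \<bar>\<Sum>y\<in>Y. d y * (q t y - q t y\<^sub>0) * (\<Prod>i\<in>I0. q i y)\<bar>" for t I0
  (* every term that peeling off the factors of I one at a time can produce *)
  define cand where "cand I = insert \<bar>\<Sum>y\<in>Y. d y\<bar> ((\<lambda>(t, I0). D t I0) ` Sigma I (\<lambda>t. Pow (I - {t})))"
    for I
  have fin: "finite (cand I)" if "finite I" for I
    using that unfolding cand_def by auto
  have "\<bar>\<Sum>y\<in>Y. d y * (\<Prod>i\<in>I. q i y)\<bar> \<le> (card I + 1) * Max (cand I)"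
    using assms
  proof (induction I rule: finite_induct)
    case empty
    then show ?case by (simp add: cand_def)
  next
    case (insert t I0)
    let ?M = "Max (cand (insert t I0))"
    have "cand I0 \<subseteq> cand (insert t I0)"
      unfolding cand_def by blast
    then have "Max (cand I0) \<le> ?M"
      using fin insert.hyps(1) by (intro Max_mono) (auto simp: cand_def)
    moreover have "\<bar>\<Sum>y\<in>Y. d y * (\<Prod>i\<in>I0. q i y)\<bar> \<le> (card I0 + 1) * Max (cand I0)"
      using insert.IH insert.prems by simp
    ultimately have IH: "\<bar>\<Sum>y\<in>Y. d y * (\<Prod>i\<in>I0. q i y)\<bar> \<le> (card I0 + 1) * ?M"
      by (meson order_trans mult_left_mono of_nat_0_le_iff)
    have "D t I0 \<in> cand (insert t I0)"
      unfolding cand_def using insert.hyps(2) by (intro insertI2 image_eqI[of _ _ "(t, I0)"]) auto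
    then have "D t I0 \<le> ?M"
      using fin insert.hyps(1) by (intro Max_ge) auto
    then show ?case
      using IH insert.hyps abs_sum_prod_insert_le[OF insert.hyps, of q y\<^sub>0 d Y] insert.prems
      unfolding D_def by (simp add: algebra_simps)
  qed
  moreover have "Max (cand I) \<in> cand I"
    using fin assms(1) by (intro Max_in) (auto simp: cand_def)
  ultimately show thesis
    using that unfolding cand_def D_def by auto
qed

lemma sum_prod_small_subproduct:
  fixes d :: "'a \<Rightarrow> real" and q :: "nat \<Rightarrow> 'a \<Rightarrow> real"
  assumes "finite Y" "card Y \<le> K" "finite I" "card I \<le> N" "\<forall>i\<in>I. \<forall>y\<in>Y. \<bar>q i y\<bar> \<le> 1"
  shows "\<exists>T\<subseteq>I. card T \<le> K \<and> \<bar>\<Sum>y\<in>Y. d y * (\<Prod>i\<in>I. q i y)\<bar>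
           \<le> (2 * (real N + 1)) ^ K * \<bar>\<Sum>y\<in>Y. d y * (\<Prod>i\<in>T. q i y)\<bar>"
  using assms
proof (induction K arbitrary: Y d I)
  case 0
  then show ?case by auto
next
  case (Suc K)
  define C where "C = 2 * (real N + 1)"
  define D where "D T = \<bar>\<Sum>y\<in>Y. d y * (\<Prod>i\<in>T. q i y)\<bar>" for T
  have card_I: "real (card I + 1) \<le> real N + 1"
    using Suc.prems by simp
  show ?case
  proof (cases "Y = {}")
    case True
    then show ?thesis by auto
  next
    case False
    then obtain y\<^sub>0 where y\<^sub>0: "y\<^sub>0 \<in> Y" by blast
    then have "\<forall>i\<in>I. \<bar>q i y\<^sub>0\<bar> \<le> 1"
      using Suc.prems(5) by blast
    with Suc.prems(3) show ?thesis
    proof (cases rule: sum_prod_telescope[where Y = Y and d = d])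
      case 1
      have "real N + 1 \<le> C * C ^ K"
        unfolding C_def by (intro order_trans[OF _ mult_left_mono[OF one_le_power]]) auto
      then have "(card I + 1) * D {} \<le> C ^ Suc K * D {}"
        using card_I by (intro mult_right_mono) (auto simp: D_def)
      then show ?thesis
        using 1 unfolding C_def D_def by (intro exI[of _ "{}"]) auto
    next
      case (2 t I0)
      define d' where "d' y = d y * (q t y - q t y\<^sub>0)" for y
      (* d' vanishes at y\<^sub>0, so the induction hypothesis applies on Y - {y\<^sub>0} *)
      have drop_y\<^sub>0: "(\<Sum>y\<in>Y. d' y * P y) = (\<Sum>y\<in>Y - {y\<^sub>0}. d' y * P y)" for P
        using Suc.prems(1) y\<^sub>0 by (simp add: sum.remove d'_def)
      have "I0 \<subseteq> I" using 2 by blast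
      then have I0: "finite I0" "card I0 \<le> N" "\<forall>i\<in>I0. \<forall>y\<in>Y - {y\<^sub>0}. \<bar>q i y\<bar> \<le> 1"
        using Suc.prems(3-5) card_mono[of I I0] by (auto intro: finite_subset)
      have "finite (Y - {y\<^sub>0})" "card (Y - {y\<^sub>0}) \<le> K"
        using Suc.prems(1,2) y\<^sub>0 by auto
      then obtain T' where T': "T' \<subseteq> I0" "card T' \<le> K"
        "\<bar>\<Sum>y\<in>Y. d' y * (\<Prod>i\<in>I0. q i y)\<bar> \<le> C ^ K * \<bar>\<Sum>y\<in>Y. d' y * (\<Prod>i\<in>T'. q i y)\<bar>"
        using Suc.IH[of "Y - {y\<^sub>0}" I0 d'] I0 unfolding drop_y\<^sub>0 C_def by blast
      have "finite T'" "t \<notin> T'"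
        using T' 2 I0 by (auto intro: finite_subset)
      moreover have "\<bar>q t y\<^sub>0\<bar> \<le> 1"
        using Suc.prems(5) 2(1) y\<^sub>0 by blast
      ultimately obtain T where T: "T \<in> {T', insert t T'}"
        "\<bar>\<Sum>y\<in>Y. d' y * (\<Prod>i\<in>T'. q i y)\<bar> \<le> 2 * D T"
        unfolding D_def d'_def by (rule abs_sum_prod_diff_le_subproduct)
      have "D I \<le> (real N + 1) * \<bar>\<Sum>y\<in>Y. d' y * (\<Prod>i\<in>I0. q i y)\<bar>"
        using order_trans[OF 2(3) mult_right_mono[OF card_I abs_ge_zero]]
        unfolding D_def d'_def by simp
      also have "\<dots> \<le> (real N + 1) * (C ^ K * (2 * D T))"
        using order_trans[OF T'(3) mult_left_mono[OF T(2)]] by (intro mult_left_mono) (auto simp: C_def)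
      also have "\<dots> = C ^ Suc K * D T"
        unfolding C_def by simp
      finally have "D I \<le> C ^ Suc K * D T" .
      moreover have "T \<subseteq> I" "card T \<le> Suc K"
        using T(1) T'(1,2) 2(1,2) \<open>finite T'\<close> by (auto simp: card_insert_if)
      ultimately show ?thesis
        unfolding C_def D_def by blast
    qed
  qed
qed

definition slice :: "nat \<Rightarrow> nat set \<Rightarrow> (nat \<Rightarrow> real) \<Rightarrow> (nat \<Rightarrow> real) set" where
  "slice n B xa = {x \<in> cube n. \<forall>i\<in>B. x i = xa i}"

definition spin_prob :: "real \<Rightarrow> real \<Rightarrow> real" where
  "spin_prob c v = exp (v * c) / (exp c + exp (- c))"

lemma finite_cube: "finite (cube n)"
proof -
  have "cube n = {x. \<forall>i. (i \<in> {..<n} \<longrightarrow> x i \<in> {1, -1}) \<and> (i \<notin> {..<n} \<longrightarrow> x i = 0)}"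
    unfolding cube_def by (intro Collect_cong) (auto simp: not_less)
  then show ?thesis
    by (simp only:) (rule finite_set_of_finite_funs; simp)
qed

lemma finite_slice: "finite (slice n B xa)"
  unfolding slice_def using finite_cube by simp

lemma abs_spin_prob_le_one:
  assumes "v = 1 \<or> v = -1"
  shows "\<bar>spin_prob c v\<bar> \<le> 1"
  using assms unfolding spin_prob_def by (auto simp: add_pos_pos)

lemma sum_slice_insert:
  fixes \<phi> :: "(nat \<Rightarrow> real) \<Rightarrow> real"
  assumes "i < n" "i \<notin> B" "xa i = 1 \<or> xa i = -1"
    and flip: "\<forall>x\<in>cube n. \<phi> (x(i := - x i)) = exp (- 2 * x i * c) * \<phi> x"
  shows "(\<Sum>x\<in>slice n (insert i B) xa. \<phi> x) = spin_prob c (xa i) * (\<Sum>x\<in>slice n B xa. \<phi> x)"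
proof -
  let ?S = "slice n (insert i B) xa" and ?S' = "slice n (insert i B) (xa(i := - xa i))"
  have split: "slice n B xa = ?S \<union> ?S'" "?S \<inter> ?S' = {}"
    using assms(1-3) unfolding slice_def cube_def by auto
  have "x(i := - x i) \<in> ?S'" if "x \<in> ?S" for x
    using that assms(1,2) unfolding slice_def cube_def by auto
  moreover have "x(i := - x i) \<in> ?S" if "x \<in> ?S'" for x
    using that assms(1,2) unfolding slice_def cube_def by auto
  ultimately have "(\<Sum>x\<in>?S'. \<phi> x) = (\<Sum>x\<in>?S. \<phi> (x(i := - x i)))"
    by (intro sum.reindex_bij_witness[of _ "\<lambda>x. x(i := - x i)" "\<lambda>x. x(i := - x i)"]) auto
  also have "\<dots> = exp (- 2 * xa i * c) * (\<Sum>x\<in>?S. \<phi> x)"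
    using flip unfolding sum_distrib_left slice_def by (intro sum.cong) auto
  finally have "(\<Sum>x\<in>slice n B xa. \<phi> x) = (1 + exp (- 2 * xa i * c)) * (\<Sum>x\<in>?S. \<phi> x)"
    unfolding split(1) by (simp add: sum.union_disjoint finite_slice split(2) algebra_simps)
  moreover have "spin_prob c (xa i) * (1 + exp (- 2 * xa i * c)) = 1"
    using assms(3) add_pos_pos[OF exp_gt_zero exp_gt_zero, of c "- c"]
    unfolding spin_prob_def by (auto simp: field_simps exp_add[symmetric])
  ultimately show ?thesis by simp
qed

lemma sum_slice_union_spins:
  fixes \<phi> :: "(nat \<Rightarrow> real) \<Rightarrow> real" and c :: "nat \<Rightarrow> real"
  assumes "finite I" "I \<subseteq> {..<n}" "I \<inter> E = {}" "\<forall>i\<in>I. xa i = 1 \<or> xa i = -1"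
    and "\<forall>i\<in>I. \<forall>x\<in>cube n. \<phi> (x(i := - x i)) = exp (- 2 * x i * c i) * \<phi> x"
  shows "(\<Sum>x\<in>slice n (I \<union> E) xa. \<phi> x) = (\<Prod>i\<in>I. spin_prob (c i) (xa i)) * (\<Sum>x\<in>slice n E xa. \<phi> x)"
  using assms
proof (induction I rule: finite_induct)
  case empty
  then show ?case by simp
next
  case (insert i I)
  have "\<forall>x\<in>cube n. \<phi> (x(i := - x i)) = exp (- 2 * x i * c i) * \<phi> x"
    using insert.prems(4) by blast
  then have "(\<Sum>x\<in>slice n (insert i (I \<union> E)) xa. \<phi> x)
      = spin_prob (c i) (xa i) * (\<Sum>x\<in>slice n (I \<union> E) xa. \<phi> x)"
    using insert.hyps(2) insert.prems(1-3) by (intro sum_slice_insert) auto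
  with insert show ?case
    by (simp add: mult.assoc)
qed

definition latent_field :: "nat \<Rightarrow> (nat \<Rightarrow> nat \<Rightarrow> real) \<Rightarrow> (nat \<Rightarrow> real) \<Rightarrow> nat \<Rightarrow> (nat \<Rightarrow> real) \<Rightarrow> real" where
  "latent_field n J g j x = (\<Sum>i<n. J i j * x i) + g j"

(* joint weight of x and of the values y of the latent units in A,
   the latent units outside A being summed out *)
definition clamped_weight :: "nat \<Rightarrow> nat \<Rightarrow> (nat \<Rightarrow> nat \<Rightarrow> real) \<Rightarrow> (nat \<Rightarrow> real) \<Rightarrow> (nat \<Rightarrow> real)
    \<Rightarrow> nat set \<Rightarrow> (nat \<Rightarrow> real) \<Rightarrow> (nat \<Rightarrow> real) \<Rightarrow> real" where
  "clamped_weight n m J h g A y x =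
     exp ((\<Sum>i<n. h i * x i) + (\<Sum>j\<in>A. y j * latent_field n J g j x))
     * (\<Prod>j\<in>{..<m} - A. exp (latent_field n J g j x) + exp (- latent_field n J g j x))"

definition local_field :: "(nat \<Rightarrow> nat \<Rightarrow> real) \<Rightarrow> (nat \<Rightarrow> real) \<Rightarrow> nat set \<Rightarrow> nat \<Rightarrow> (nat \<Rightarrow> real) \<Rightarrow> real" where
  "local_field J h A i y = h i + (\<Sum>j\<in>A. y j * J i j)"

definition latent_nbrs :: "nat \<Rightarrow> (nat \<Rightarrow> nat \<Rightarrow> real) \<Rightarrow> nat set \<Rightarrow> nat set" where
  "latent_nbrs m J I = {j. j < m \<and> (\<exists>i\<in>I. J i j \<noteq> 0)}"

definition marg_weight :: "nat \<Rightarrow> nat \<Rightarrow> (nat \<Rightarrow> nat \<Rightarrow> real) \<Rightarrow> (nat \<Rightarrow> real) \<Rightarrow> (nat \<Rightarrow> real)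
    \<Rightarrow> nat set \<Rightarrow> (nat \<Rightarrow> real) \<Rightarrow> real" where
  "marg_weight n m J h g B xa = (\<Sum>x\<in>slice n B xa. exp (rbm_f n m J h g x))"

lemma exp_rho: "exp (rho t) = exp t + exp (- t)"
  unfolding rho_def by (simp add: add_pos_pos)

lemma exp_rbm_f_latent_sum:
  assumes "A \<subseteq> {..<m}"
  shows "exp (rbm_f n m J h g x) = (\<Sum>y\<in>PiE A (\<lambda>_. {1, -1}). clamped_weight n m J h g A y x)"
proof -
  let ?t = "\<lambda>j. latent_field n J g j x"
  have fin: "finite A"
    using assms finite_subset by blast
  have "exp (rbm_f n m J h g x) = exp (\<Sum>i<n. h i * x i) * (\<Prod>j<m. exp (?t j) + exp (- ?t j))"
    unfolding rbm_f_def latent_field_def exp_add exp_sum[OF finite_lessThan] exp_rho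
    by (simp add: mult.commute)
  also have "(\<Prod>j<m. exp (?t j) + exp (- ?t j))
      = (\<Prod>j\<in>A. \<Sum>v\<in>{1, -1}. exp (v * ?t j)) * (\<Prod>j\<in>{..<m} - A. exp (?t j) + exp (- ?t j))"
    using prod.subset_diff[OF assms] by (simp add: mult.commute)
  also have "(\<Prod>j\<in>A. \<Sum>v\<in>{1, -1}. exp (v * ?t j))
      = (\<Sum>y\<in>PiE A (\<lambda>_. {1, -1}). \<Prod>j\<in>A. exp (y j * ?t j))"
    by (rule prod_sum_PiE) (auto simp: fin)
  also have "\<dots> = (\<Sum>y\<in>PiE A (\<lambda>_. {1, -1}). exp (\<Sum>j\<in>A. y j * ?t j))"
    by (simp add: exp_sum fin)
  finally show ?thesis
    unfolding clamped_weight_def by (simp add: sum_distrib_left sum_distrib_right exp_add mult.assoc)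
qed

lemma sum_lessThan_fun_upd:
  fixes a x :: "nat \<Rightarrow> real"
  assumes "i < n"
  shows "(\<Sum>k<n. a k * (x(i := v)) k) = (\<Sum>k<n. a k * x k) + a i * (v - x i)"
  using assms by (simp add: sum.remove[of "{..<n}" i] algebra_simps)

lemma clamped_weight_flip:
  assumes "i < n" "\<forall>j<m. j \<notin> A \<longrightarrow> J i j = 0"
  shows "clamped_weight n m J h g A y (x(i := - x i))
    = exp (- 2 * x i * local_field J h A i y) * clamped_weight n m J h g A y x"
proof -
  have field: "latent_field n J g j (x(i := - x i)) = latent_field n J g j x - 2 * x i * J i j" for j
    unfolding latent_field_def sum_lessThan_fun_upd[OF assms(1)] by simp
  have exponent: "(\<Sum>k<n. h k * (x(i := - x i)) k) + (\<Sum>j\<in>A. y j * latent_field n J g j (x(i := - x i)))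
      = - 2 * x i * local_field J h A i y + ((\<Sum>k<n. h k * x k) + (\<Sum>j\<in>A. y j * latent_field n J g j x))"
    unfolding field sum_lessThan_fun_upd[OF assms(1)] local_field_def
    by (simp add: algebra_simps sum_subtractf sum_distrib_left sum_negf)
  have "latent_field n J g j (x(i := - x i)) = latent_field n J g j x" if "j \<in> {..<m} - A" for j
    using that assms(2) unfolding field by simp
  then have "(\<Prod>j\<in>{..<m} - A. exp (latent_field n J g j (x(i := - x i))) + exp (- latent_field n J g j (x(i := - x i))))
      = (\<Prod>j\<in>{..<m} - A. exp (latent_field n J g j x) + exp (- latent_field n J g j x))"
    by (intro prod.cong) auto
  then show ?thesis
    unfolding clamped_weight_def exponent exp_add by (simp only: mult.assoc)
qed

lemma marg_weight_latent_mixture: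
  assumes "A \<subseteq> {..<m}" "I \<subseteq> {..<n}" "I \<inter> E = {}" "\<forall>i\<in>I. xa i = 1 \<or> xa i = -1"
    and "\<forall>i\<in>I. \<forall>j<m. j \<notin> A \<longrightarrow> J i j = 0"
  shows "marg_weight n m J h g (I \<union> E) xa = (\<Sum>y\<in>PiE A (\<lambda>_. {1, -1}).
     (\<Sum>x\<in>slice n E xa. clamped_weight n m J h g A y x) * (\<Prod>i\<in>I. spin_prob (local_field J h A i y) (xa i)))"
proof -
  have "marg_weight n m J h g (I \<union> E) xa
      = (\<Sum>y\<in>PiE A (\<lambda>_. {1, -1}). \<Sum>x\<in>slice n (I \<union> E) xa. clamped_weight n m J h g A y x)"
    unfolding marg_weight_def exp_rbm_f_latent_sum[OF assms(1)] by (rule sum.swap)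
  also have "\<dots> = (\<Sum>y\<in>PiE A (\<lambda>_. {1, -1}).
     (\<Prod>i\<in>I. spin_prob (local_field J h A i y) (xa i)) * (\<Sum>x\<in>slice n E xa. clamped_weight n m J h g A y x))"
  proof (intro sum.cong refl sum_slice_union_spins)
    show "\<forall>i\<in>I. \<forall>x\<in>cube n. clamped_weight n m J h g A y (x(i := - x i))
        = exp (- 2 * x i * local_field J h A i y) * clamped_weight n m J h g A y x" for y
      using assms(2,5) by (blast intro: clamped_weight_flip)
  qed (use assms(2-4) finite_subset[OF assms(2)] in auto)
  finally show ?thesis
    by (simp add: mult.commute)
qed

lemma marg_weight_pos:
  assumes "B \<subseteq> {..<n}" "\<forall>i\<in>B. xa i = 1 \<or> xa i = -1"
  shows "0 < marg_weight n m J h g B xa"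
proof -
  define x where "x i = (if i \<in> B then xa i else if i < n then 1 else 0)" for i
  have "x \<in> slice n B xa"
    using assms unfolding x_def slice_def cube_def by auto
  then show ?thesis
    unfolding marg_weight_def by (intro sum_pos) (auto simp: finite_slice)
qed

lemma rbm_cond_eq_marg_weight:
  "rbm_cond n m J h g A S xa = marg_weight n m J h g (A \<union> S) xa / marg_weight n m J h g S xa"
proof -
  let ?Z = "\<Sum>x\<in>cube n. exp (rbm_f n m J h g x)"
  have "0 < ?Z"
    using marg_weight_pos[of "{}" n xa m J h g] unfolding marg_weight_def slice_def by simp
  moreover have "rbm_prob n m J h g B xa = marg_weight n m J h g B xa / ?Z" for B
    unfolding rbm_prob_def marg_weight_def slice_def ..
  ultimately show ?thesis
    unfolding rbm_cond_def by simp
qed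

lemma rbm_nu_sum_prod_form:
  assumes "u < n" "S \<subseteq> {..<n}" "I \<subseteq> {..<n}" "u \<notin> I" "u \<notin> S" "I \<inter> S = {}"
    and "\<forall>i\<in>insert u (I \<union> S). xa i = 1 \<or> xa i = -1"
  obtains d where "\<forall>I'\<subseteq>I. rbm_nu n m J h g u I' S xa = \<bar>\<Sum>y\<in>PiE (latent_nbrs m J I) (\<lambda>_. {1, -1}).
     d y * (\<Prod>i\<in>I'. spin_prob (local_field J h (latent_nbrs m J I) i y) (xa i))\<bar>"
proof -
  let ?A = "latent_nbrs m J I"
  let ?Y = "PiE ?A (\<lambda>_. {1, -1 :: real})"
  define M where "M B = marg_weight n m J h g B xa" for B
  define w where "w E y = (\<Sum>x\<in>slice n E xa. clamped_weight n m J h g ?A y x)" for E y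
  define q where "q I' y = (\<Prod>i\<in>I'. spin_prob (local_field J h ?A i y) (xa i))" for I' y
  have mix: "M (I' \<union> E) = (\<Sum>y\<in>?Y. w E y * q I' y)" if "I' \<subseteq> I" "I \<inter> E = {}" for I' E
    unfolding M_def w_def q_def using that assms(3,7)
    by (intro marg_weight_latent_mixture) (auto simp: latent_nbrs_def)
  have "0 < M S"
    unfolding M_def using assms(2,7) by (intro marg_weight_pos) auto
  define d where "d y = w (insert u S) y / M S - M (insert u S) * w S y / (M S)\<^sup>2" for y
  have "rbm_nu n m J h g u I' S xa = \<bar>\<Sum>y\<in>?Y. d y * q I' y\<bar>" if "I' \<subseteq> I" for I'
  proof -
    have "insert u I' \<union> S = I' \<union> insert u S" "{u} \<union> S = insert u S"
      by auto
    then have "rbm_nu n m J h g u I' S xa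
        = \<bar>M (I' \<union> insert u S) / M S - M (insert u S) / M S * (M (I' \<union> S) / M S)\<bar>"
      unfolding rbm_nu_def rbm_cond_eq_marg_weight M_def by simp
    also have "M (I' \<union> insert u S) = (\<Sum>y\<in>?Y. w (insert u S) y * q I' y)"
      by (rule mix[OF that]) (use assms(4,6) in auto)
    also have "M (I' \<union> S) = (\<Sum>y\<in>?Y. w S y * q I' y)"
      by (rule mix[OF that]) (use assms(6) in auto)
    also have "\<bar>(\<Sum>y\<in>?Y. w (insert u S) y * q I' y) / M S
          - M (insert u S) / M S * ((\<Sum>y\<in>?Y. w S y * q I' y) / M S)\<bar>
        = \<bar>\<Sum>y\<in>?Y. d y * q I' y\<bar>"
      using \<open>0 < M S\<close> unfolding d_def
      by (simp add: sum_divide_distrib sum_distrib_left sum_subtractf[symmetric] power2_eq_square algebra_simps)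
    finally show ?thesis .
  qed
  with that show thesis
    unfolding q_def by blast
qed

lemma card_latent_nbrs_le_rbm_s:
  assumes "u < n" "I \<subseteq> mrf_nbhd n m J h g u"
  shows "card (latent_nbrs m J I) \<le> rbm_s n m J h g"
proof -
  have "card (latent_nbrs m J I) \<le> card {j. j < m \<and> (\<exists>i\<in>mrf_nbhd n m J h g u. J i j \<noteq> 0)}"
    using assms(2) unfolding latent_nbrs_def by (intro card_mono) auto
  also have "\<dots> \<le> rbm_s n m J h g"
    unfolding rbm_s_def using assms(1) by (intro Max_ge) auto
  finally show ?thesis .
qed

lemma two_mult_Suc_pow_le:
  assumes "1 \<le> N"
  shows "(2 * (real N + 1)) ^ K \<le> 4 ^ K * real N ^ (K * (K + 1))"
proof -
  have "(2 * (real N + 1)) ^ K \<le> (4 * real N) ^ K"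
    using assms by (intro power_mono) auto
  also have "\<dots> = 4 ^ K * real N ^ K"
    by (simp add: power_mult_distrib)
  also have "\<dots> \<le> 4 ^ K * real N ^ (K * (K + 1))"
    using assms by (intro mult_left_mono power_increasing) auto
  finally show ?thesis .
qed

theorem lemma3:
  fixes n m :: nat and J :: "nat \<Rightarrow> nat \<Rightarrow> real" and h g :: "nat \<Rightarrow> real"
    and u :: nat and I S :: "nat set" and xa :: "nat \<Rightarrow> real"
  assumes "u < n"
    and "S \<subseteq> {..<n}"
    and "I \<noteq> {}"
    and "I \<subseteq> mrf_nbhd n m J h g u"
    and "u \<notin> I" and "u \<notin> S" and "I \<inter> S = {}"
    and "\<forall>i\<in>insert u (I \<union> S). xa i = 1 \<or> xa i = -1"
  shows "\<exists>I'. I' \<subseteq> I \<and> card I' \<le> 2 ^ rbm_s n m J h g \<and>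
    rbm_nu n m J h g u I' S xa \<ge>
      (1 / 4 ^ (2 ^ rbm_s n m J h g)) * (1 / real (card I)) ^ (2 ^ rbm_s n m J h g * (2 ^ rbm_s n m J h g + 1))
      * rbm_nu n m J h g u I S xa"
proof -
  let ?K = "2 ^ rbm_s n m J h g :: nat"
  let ?A = "latent_nbrs m J I"
  let ?Y = "PiE ?A (\<lambda>_. {1, -1 :: real})"
  let ?q = "\<lambda>i y. spin_prob (local_field J h ?A i y) (xa i)"
  let ?nu = "\<lambda>I'. rbm_nu n m J h g u I' S xa"
  have I: "I \<subseteq> {..<n}" "finite I" "1 \<le> card I"
    using assms(3,4) finite_subset[of I "{..<n}"] unfolding mrf_nbhd_def
    by (auto simp: Suc_le_eq card_gt_0_iff)
  obtain d where nu: "\<forall>I'\<subseteq>I. ?nu I' = \<bar>\<Sum>y\<in>?Y. d y * (\<Prod>i\<in>I'. ?q i y)\<bar>"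
    using rbm_nu_sum_prod_form[OF assms(1,2) I(1) assms(5-8)] by blast
  have "finite ?A" "card ?A \<le> rbm_s n m J h g"
    using card_latent_nbrs_le_rbm_s[OF assms(1,4)] by (auto simp: latent_nbrs_def)
  then have "finite ?Y" "card ?Y \<le> ?K"
    by (simp_all add: finite_PiE card_PiE numeral_2_eq_2[symmetric] power_increasing)
  moreover have "\<forall>i\<in>I. \<forall>y\<in>?Y. \<bar>?q i y\<bar> \<le> 1"
    using assms(8) by (auto intro: abs_spin_prob_le_one)
  ultimately obtain T where T: "T \<subseteq> I" "card T \<le> ?K"
    "?nu I \<le> (2 * (real (card I) + 1)) ^ ?K * ?nu T"
    using sum_prod_small_subproduct[of ?Y ?K I "card I" ?q d] I(2) nu by auto
  define C where "C = 4 ^ ?K * real (card I) ^ (?K * (?K + 1))"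
  have "?nu I \<le> C * ?nu T"
    using order_trans[OF T(3) mult_right_mono[OF two_mult_Suc_pow_le[OF I(3)]]]
    unfolding C_def rbm_nu_def by simp
  moreover have "0 < C"
    using I(3) unfolding C_def by simp
  ultimately have "?nu I / C \<le> ?nu T"
    by (simp add: pos_divide_le_eq mult.commute)
  then show ?thesis
    using T(1,2) unfolding C_def by (intro exI[of _ T]) (simp add: power_one_over)
qed

end
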